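(* (1) Let $(A,\cdot,[-,-])$ be a Poisson algebra and $\mathcal{B}$ a nondegenerate symmetric bilinear form on $A$ that is invariant on $(A,\cdot)$ and a commutative 2-cocycle on $(A,[-,-])$. Define $\circ$ on $A$ by $\mathcal{B}(x\circ y,z)=\mathcal{B}(y,[x,z])$ for all $x,y,z$. Then $(A,\cdot,\circ)$ is a PCA algebra and $x\circ y-y\circ x=[x,y]$ for all $x,y$. (2) Conversely, let $(A,\cdot,\circ)$ be a PCA algebra and $[x,y]=x\circ y-y\circ x$. Then $A\ltimes_{-\mathcal{L}^*_{\cdot},-\mathcal{L}^*_{\circ}}A^*$ is a Poisson algebra, and the bilinear form $\mathcal{B}_d$ on $A\oplus A^*$ is invariant on its commutative associative product and a commutative 2-cocycle on its Lie bracket.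
   Context: Finite-dimensional spaces, characteristic zero. $\mathcal{L}_{\ast}(x)y=x\ast y$. For $\rho:A\to\mathrm{End}(V)$, $\rho^*:A\to\mathrm{End}(V^* )$ is $\langle\rho^*(x)v^*,u\rangle=-\langle v^*,\rho(x)u\rangle$. For a Poisson algebra $(A,\cdot,[-,-])$ and linear maps $\mu,\rho:A\to\mathrm{End}(V)$, $A\ltimes_{\mu,\rho}V$ is $A\oplus V$ with $(x,u)\cdot(y,v)=(x\cdot y,\mu(x)v+\mu(y)u)$ and $[(x,u),(y,v)]=([x,y],\rho(x)v-\rho(y)u)$. $\mathcal{B}_d((x,a^* ),(y,b^* ))=\langle x,b^*\rangle+\langle a^*,y\rangle$. A bilinear form $\mathcal{B}$ is invariant on $(A,\cdot)$ if $\mathcal{B}(x\cdot y,z)=\mathcal{B}(x,y\cdot z)$; a commutative 2-cocycle on a Lie algebra if it is symmetric and $\mathcal{B}([x,y],z)+\mathcal{B}([y,z],x)+\mathcal{B}([z,x],y)=0$. Poisson algebra: $(A,\cdot)$ commutative associative, $(A,[-,-])$ Lie, $[z,x\cdot y]=[z,x]\cdot y+x\cdot[z,y]$. Anti-pre-Lie algebra: $(A,\circ)$ with $x\circ(y\circ z)-y\circ(x\circ z)=[y,x]\circ z$ and $[x,y]\circ z+[y,z]\circ x+[z,x]\circ y=0$, where $[x,y]=x\circ y-y\circ x$. A PCA algebra is $(A,\cdot,\circ)$ with $(A,\cdot)$ commutative associative, $(A,\circ)$ anti-pre-Lie, and for all $x,y,z$: $(x\cdot y)\circ z=x\cdot(y\circ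 z)+y\cdot(x\circ z)$; $(x\circ y-y\circ x)\cdot z=y\cdot(x\circ z)-x\circ(y\cdot z)$; $z\circ(x\cdot y)+z\cdot(x\circ y)+z\cdot(y\circ x)-2(x\cdot y)\circ z=0$. *)

theory Defs
  imports Main "HOL-Library.Function_Algebras" "HOL-Library.Product_Plus"
begin

definition bilin_op :: "('k::field \<Rightarrow> 'v::ab_group_add \<Rightarrow> 'v) \<Rightarrow> ('v \<Rightarrow> 'v \<Rightarrow> 'v) \<Rightarrow> bool" where
  "bilin_op sc m \<longleftrightarrow>
     (\<forall>x y z. m (x + y) z = m x z + m y z) \<and>
     (\<forall>x y z. m x (y + z) = m x y + m x z) \<and>
     (\<forall>c x y. m (sc c x) y = sc c (m x y)) \<and>
     (\<forall>c x y. m x (sc c y) = sc c (m x y))"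

definition bilin_form :: "('k::field \<Rightarrow> 'v::ab_group_add \<Rightarrow> 'v) \<Rightarrow> ('v \<Rightarrow> 'v \<Rightarrow> 'k) \<Rightarrow> bool" where
  "bilin_form sc B \<longleftrightarrow>
     (\<forall>x y z. B (x + y) z = B x z + B y z) \<and>
     (\<forall>x y z. B x (y + z) = B x y + B x z) \<and>
     (\<forall>c x y. B (sc c x) y = c * B x y) \<and>
     (\<forall>c x y. B x (sc c y) = c * B x y)"

definition comm_assoc_alg where
  "comm_assoc_alg sc m \<longleftrightarrow> bilin_op sc m \<and>
     (\<forall>x y. m x y = m y x) \<and> (\<forall>x y z. m (m x y) z = m x (m y z))"

definition lie_alg where
  "lie_alg sc b \<longleftrightarrow> bilin_op sc b \<and> (\<forall>x. b x x = 0) \<and>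
     (\<forall>x y z. b x (b y z) + b y (b z x) + b z (b x y) = 0)"

definition poisson_alg where
  "poisson_alg sc m b \<longleftrightarrow> comm_assoc_alg sc m \<and> lie_alg sc b \<and>
     (\<forall>x y z. b z (m x y) = m (b z x) y + m x (b z y))"

definition anti_pre_lie_alg where
  "anti_pre_lie_alg sc c \<longleftrightarrow> bilin_op sc c \<and>
     (\<forall>x y z. c x (c y z) - c y (c x z) = c (c y x - c x y) z) \<and>
     (\<forall>x y z. c (c x y - c y x) z + c (c y z - c z y) x + c (c z x - c x z) y = 0)"

definition PCA_alg where
  "PCA_alg sc m c \<longleftrightarrow> comm_assoc_alg sc m \<and> anti_pre_lie_alg sc c \<and>
     (\<forall>x y z. c (m x y) z = m x (c y z) + m y (c x z)) \<and>
     (\<forall>x y z. m (c x y - c y x) z = m y (c x z) - c x (m y z)) \<and>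
     (\<forall>x y z. c z (m x y) + m z (c x y) + m z (c y x) - c (m x y) z - c (m x y) z = 0)"

definition symmetric_form where
  "symmetric_form B \<longleftrightarrow> (\<forall>x y. B x y = B y x)"

definition nondegenerate_form where
  "nondegenerate_form B \<longleftrightarrow> (\<forall>x. (\<forall>y. B x y = 0) \<longrightarrow> x = 0)"

definition invariant_form where
  "invariant_form m B \<longleftrightarrow> (\<forall>x y z. B (m x y) z = B x (m y z))"

definition comm_2cocycle where
  "comm_2cocycle b B \<longleftrightarrow> symmetric_form B \<and>
     (\<forall>x y z. B (b x y) z + B (b y z) x + B (b z x) y = 0)"

(* Concrete finite-dimensional model: A = k^n, realized as functions 'n \<Rightarrow> 'k, 'n finite *)

definition vsc :: "'k::field \<Rightarrow> ('n \<Rightarrow> 'k) \<Rightarrow> ('n \<Rightarrow> 'k)" where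
  "vsc c x = (\<lambda>i. c * x i)"

definition psc :: "'k::field \<Rightarrow> ('n \<Rightarrow> 'k) \<times> ('n \<Rightarrow> 'k) \<Rightarrow> ('n \<Rightarrow> 'k) \<times> ('n \<Rightarrow> 'k)" where
  "psc c p = (vsc c (fst p), vsc c (snd p))"

(* natural pairing between A-dual = k^n and A = k^n (dual basis identification) *)
definition dpair :: "('n::finite \<Rightarrow> 'k::field) \<Rightarrow> ('n \<Rightarrow> 'k) \<Rightarrow> 'k" where
  "dpair a u = (\<Sum>i\<in>UNIV. a i * u i)"

definition dual_rep :: "(('n::finite \<Rightarrow> 'k::field) \<Rightarrow> ('n \<Rightarrow> 'k) \<Rightarrow> ('n \<Rightarrow> 'k)) \<Rightarrow>
     ('n \<Rightarrow> 'k) \<Rightarrow> ('n \<Rightarrow> 'k) \<Rightarrow> ('n \<Rightarrow> 'k)" where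
  "dual_rep \<rho> x a = (THE b. \<forall>u. dpair b u = - dpair a (\<rho> x u))"

definition sd_mult :: "('a \<Rightarrow> 'a \<Rightarrow> 'a) \<Rightarrow> ('a \<Rightarrow> 'v \<Rightarrow> 'v::plus) \<Rightarrow> 'a \<times> 'v \<Rightarrow> 'a \<times> 'v \<Rightarrow> 'a \<times> 'v" where
  "sd_mult m \<mu> p q = (m (fst p) (fst q), \<mu> (fst p) (snd q) + \<mu> (fst q) (snd p))"

definition sd_bracket :: "('a \<Rightarrow> 'a \<Rightarrow> 'a) \<Rightarrow> ('a \<Rightarrow> 'v \<Rightarrow> 'v::minus) \<Rightarrow> 'a \<times> 'v \<Rightarrow> 'a \<times> 'v \<Rightarrow> 'a \<times> 'v" where
  "sd_bracket b \<rho> p q = (b (fst p) (fst q), \<rho> (fst p) (snd q) - \<rho> (fst q) (snd p))"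

definition B_d :: "('n::finite \<Rightarrow> 'k::field) \<times> ('n \<Rightarrow> 'k) \<Rightarrow> ('n \<Rightarrow> 'k) \<times> ('n \<Rightarrow> 'k) \<Rightarrow> 'k" where
  "B_d p q = dpair (snd q) (fst p) + dpair (snd p) (fst q)"

end

theory Submission
  imports Defs
begin

text \<open>
  (1) Each PCA identity is checked after pairing with an arbitrary \<open>w\<close> and invoking
  nondegeneracy: the defining identity of \<open>\<circ>\<close> turns it into the bracket, invariance and the
  Leibniz rule move products across \<open>\<B>\<close>, and Jacobi together with the cocycle condition
  closes the computation.  The second anti-pre-Lie identity is the subtle one: the cocycle
  condition, applied in two different ways, shows that the relevant cyclic sum \<open>G\<close> satisfies
  both \<open>G = -S\<close> and \<open>S = G\<close>, so \<open>2G = 0\<close>.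

  (2) A PCA algebra carries the Poisson algebra \<open>(A, \<cdot>, [-,-])\<close>, and the PCA axioms say
  precisely that \<open>(-\<L>\<^sup>*\<^sub>\<cdot>, -\<L>\<^sup>*\<^sub>\<circ>)\<close> is a representation of it, so the semidirect
  product is Poisson.  Under the pairing, invariance of \<open>\<B>\<^sub>d\<close> reduces to commutativity of
  \<open>\<cdot>\<close>, and its cocycle property to \<open>[x,y] = x \<circ> y - y \<circ> x\<close>.
\<close>

lemma biadditive_rules:
  fixes f :: "'a::ab_group_add \<Rightarrow> 'b::ab_group_add \<Rightarrow> 'c::ab_group_add"
  assumes add_left: "\<And>x y z. f (x + y) z = f x z + f y z"
    and add_right: "\<And>x y z. f x (y + z) = f x y + f x z"
  shows "f 0 z = 0" "f x 0 = 0" "f (- x) z = - f x z" "f x (- z) = - f x z"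
    "f (x - x') z = f x z - f x' z" "f x (z - z') = f x z - f x z'"
proof -
  show zero_left: "f 0 z = 0" for z using add_left[of 0 0 z] by simp
  show zero_right: "f x 0 = 0" for x using add_right[of x 0 0] by simp
  show minus_left: "f (- x) z = - f x z" for x z
    using add_left[of "- x" x z] zero_left by (simp add: eq_neg_iff_add_eq_0)
  show minus_right: "f x (- z) = - f x z" for x z
    using add_right[of x "- z" z] zero_right by (simp add: eq_neg_iff_add_eq_0)
  show "f (x - x') z = f x z - f x' z" "f x (z - z') = f x z - f x z'"
    by (simp_all only: diff_conv_add_uminus add_left add_right minus_left minus_right)
qed

lemma bilin_op_rules:
  assumes "bilin_op sc m"
  shows "m (x + y) z = m x z + m y z" "m x (y + z) = m x y + m x z"
    "m 0 z = 0" "m x 0 = 0" "m (- x) z = - m x z" "m x (- z) = - m x z"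
    "m (x - y) z = m x z - m y z" "m x (y - z) = m x y - m x z"
    "m (sc c x) z = sc c (m x z)" "m x (sc c z) = sc c (m x z)"
  using assms biadditive_rules[of m] unfolding bilin_op_def by simp_all

lemma bilin_form_rules:
  assumes "bilin_form sc B"
  shows "B (x + y) z = B x z + B y z" "B x (y + z) = B x y + B x z"
    "B 0 z = 0" "B x 0 = 0" "B (- x) z = - B x z" "B x (- z) = - B x z"
    "B (x - y) z = B x z - B y z" "B x (y - z) = B x y - B x z"
    "B (sc c x) z = c * B x z" "B x (sc c z) = c * B x z"
  using assms biadditive_rules[of B] unfolding bilin_form_def by simp_all

lemma bilin_op_commutator:
  assumes "bilin_op sc c" and sc_diff: "\<And>k u v. sc k (u - v) = sc k u - sc k v"
  shows "bilin_op sc (\<lambda>x y. c x y - c y x)"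
  using assms(1) unfolding bilin_op_def
  by (simp add: bilin_op_rules[OF assms(1)] sc_diff algebra_simps)

locale poisson_cocycle_form =
  fixes sc :: "'k::field_char_0 \<Rightarrow> 'v::ab_group_add \<Rightarrow> 'v"
    and m br circ :: "'v \<Rightarrow> 'v \<Rightarrow> 'v" and B :: "'v \<Rightarrow> 'v \<Rightarrow> 'k"
  assumes poisson: "poisson_alg sc m br" and bilin: "bilin_form sc B"
    and nondeg: "nondegenerate_form B" and sym: "symmetric_form B"
    and invariant: "invariant_form m B" and cocycle: "comm_2cocycle br B"
    and circ_adjoint: "\<And>x y z. B (circ x y) z = B y (br x z)"
begin

lemma m_bilin: "bilin_op sc m" and br_bilin: "bilin_op sc br"
  and m_comm: "m x y = m y x" and m_assoc: "m (m x y) z = m x (m y z)"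
  and br_self: "br x x = 0" and br_jacobi: "br x (br y z) + br y (br z x) + br z (br x y) = 0"
  and br_leibniz: "br z (m x y) = m (br z x) y + m x (br z y)"
  using poisson unfolding poisson_alg_def comm_assoc_alg_def lie_alg_def by auto

lemmas m_rules = bilin_op_rules[OF m_bilin] and br_rules = bilin_op_rules[OF br_bilin]
  and B_rules = bilin_form_rules[OF bilin]

lemma B_sym: "B x y = B y x" and B_invariant: "B (m x y) z = B x (m y z)"
  and B_cocycle: "B (br x y) z + B (br y z) x + B (br z x) y = 0"
  using sym invariant cocycle unfolding symmetric_form_def invariant_form_def comm_2cocycle_def
  by auto

lemma br_anticomm: "br y x = - br x y"
proof -
  have "br y x + br x y = 0"
    using br_self[of "x + y"] by (simp add: br_rules br_self[of x] br_self[of y])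
  then show ?thesis by (simp add: eq_neg_iff_add_eq_0)
qed

lemma B_eqI: "(\<And>w. B p w = B q w) \<Longrightarrow> p = q"
  using nondeg unfolding nondegenerate_form_def by (metis B_rules(7) right_minus_eq)

lemma B_m_swap: "B (m x y) z = B y (m x z)"
  by (metis B_invariant m_comm)

lemma B_m_left_comm: "B x (m y z) = B y (m x z)"
  by (metis B_invariant m_comm)

lemma circ_minus_circ: "circ x y - circ y x = br x y"
proof (rule B_eqI)
  fix w
  have "B (circ x y - circ y x) w = B y (br x w) - B x (br y w)"
    by (simp add: B_rules circ_adjoint)
  also have "\<dots> = B (br x y) w"
    using B_cocycle[of x y w] unfolding br_anticomm[of w x] B_rules B_sym[of x] B_sym[of y]
    by (simp add: algebra_simps)
  finally show "B (circ x y - circ y x) w = B (br x y) w" .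
qed

lemma B_m_circ: "B (m u (circ x y)) w = B y (br x (m u w))"
  by (simp add: B_m_swap circ_adjoint)

lemma circ_bilin: "bilin_op sc circ"
  unfolding bilin_op_def by (intro conjI allI; rule B_eqI; simp add: circ_adjoint B_rules br_rules)

lemma circ_m_left: "circ (m x y) z = m x (circ y z) + m y (circ x z)"
proof (rule B_eqI)
  fix w
  show "B (circ (m x y) z) w = B (m x (circ y z) + m y (circ x z)) w"
    using br_leibniz[of w x y]
    by (simp add: circ_adjoint br_anticomm[of _ w] br_anticomm[of y x] br_leibniz B_rules m_rules
        B_m_swap m_comm)
qed

lemma m_commutator_circ: "m (circ x y - circ y x) z = m y (circ x z) - circ x (m y z)"
proof (rule B_eqI)
  fix w
  show "B (m (circ x y - circ y x) z) w = B (m y (circ x z) - circ x (m y z)) w"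
    by (simp add: circ_minus_circ circ_adjoint br_leibniz B_rules B_m_swap)
qed

lemma circ_right_m:
  "circ z (m x y) + m z (circ x y) + m z (circ y x) - circ (m x y) z - circ (m x y) z = 0"
proof (rule B_eqI)
  fix w
  have "B (br z w) (m x y) + B (br w (m x y)) z + B (br (m x y) z) w = 0"
    by (rule B_cocycle)
  then show "B (circ z (m x y) + m z (circ x y) + m z (circ y x) - circ (m x y) z - circ (m x y) z) w
      = B 0 w"
    by (simp only: B_rules circ_adjoint B_m_circ)
      (simp add: br_anticomm[of _ w] br_anticomm[of z] br_anticomm[of "m x y"] br_leibniz
        B_rules m_rules B_invariant B_m_left_comm B_sym[of _ z] B_sym[of "br z w"] m_comm algebra_simps)
qed

lemma br_jacobi_left: "br (br x y) z = br x (br y z) - br y (br x z)"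
  using br_jacobi[of x y z]
  unfolding br_anticomm[of z "br x y"] br_anticomm[of z x] br_rules
  by (simp add: algebra_simps)

lemma circ_left_symmetric: "circ x (circ y z) - circ y (circ x z) = circ (circ y x - circ x y) z"
proof (rule B_eqI)
  fix w
  show "B (circ x (circ y z) - circ y (circ x z)) w = B (circ (circ y x - circ x y) z) w"
    by (simp add: circ_minus_circ circ_adjoint br_jacobi_left B_rules)
qed

lemma br_jacobi_cyclic: "br (br x y) z + br (br y z) x + br (br z x) y = 0"
  using br_jacobi[of z x y]
  unfolding br_anticomm[of z "br x y"] br_anticomm[of x "br y z"] br_anticomm[of y "br z x"]
    minus_add_distrib[symmetric] neg_equal_0_iff_equal .

lemma B_br_jacobi: "B (br (br a b) c) d + B (br (br b c) a) d + B (br (br c a) b) d = 0"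
  using arg_cong[OF br_jacobi_cyclic[of a b c], of "\<lambda>u. B u d"] by (simp add: B_rules)

lemma B_br_br_anticomm: "B (br (br b a) c) d = - B (br (br a b) c) d"
  by (simp add: br_anticomm[of b a] br_rules B_rules)

lemma B_br_br_swap: "B (br (br a b) c) d - B (br (br a b) d) c = - B (br a b) (br c d)"
  using B_cocycle[of "br a b" c d] br_anticomm[of d "br a b"]
  by (simp add: B_rules B_sym[of "br c d"] algebra_simps)

lemma B_br_br_cyclic: "B (br (br x y) w) z + B (br (br y z) w) x + B (br (br z x) w) y = 0"
  (is "?G = 0")
proof -
  \<comment> \<open>The only place where characteristic zero is needed.\<close>
  have "?G = - (B (br x y) (br w z) + B (br y z) (br w x) + B (br z x) (br w y))"
    using B_br_br_swap[of x y w z] B_br_br_swap[of y z w x] B_br_br_swap[of z x w y]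
      B_br_jacobi[of x y z w]
    by algebra
  moreover have "B (br w z) (br x y) + B (br w x) (br y z) + B (br w y) (br z x) = ?G"
    using B_br_br_swap[of w z x y] B_br_br_swap[of w x y z] B_br_br_swap[of w y z x]
      B_br_jacobi[of w z y x] B_br_jacobi[of w x z y] B_br_jacobi[of w y x z]
      B_br_br_anticomm[of y z w x] B_br_br_anticomm[of w y z x]
      B_br_br_anticomm[of z x w y] B_br_br_anticomm[of w z x y]
      B_br_br_anticomm[of x y w z] B_br_br_anticomm[of w x y z]
    by algebra
  ultimately have "2 * ?G = 0"
    using B_sym[of "br w z" "br x y"] B_sym[of "br w x" "br y z"] B_sym[of "br w y" "br z x"]
    by algebra
  then show ?thesis
    unfolding mult_eq_0_iff by simp
qed

lemma circ_commutator_cyclic: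
  "circ (circ x y - circ y x) z + circ (circ y z - circ z y) x + circ (circ z x - circ x z) y = 0"
proof (rule B_eqI)
  fix w
  show "B (circ (circ x y - circ y x) z + circ (circ y z - circ z y) x
      + circ (circ z x - circ x z) y) w = B 0 w"
    using B_br_br_cyclic[of x y w z]
    by (simp add: circ_minus_circ circ_adjoint B_rules B_sym[of z] B_sym[of x] B_sym[of y])
qed

lemma PCA_alg_circ: "PCA_alg sc m circ"
  unfolding PCA_alg_def comm_assoc_alg_def anti_pre_lie_alg_def
  using m_bilin m_comm m_assoc circ_bilin circ_left_symmetric circ_commutator_cyclic circ_m_left
    m_commutator_circ circ_right_m
  by blast

end

lemma vsc_add: "vsc k (u + v) = vsc k u + vsc k v"
  by (simp add: vsc_def fun_eq_iff algebra_simps)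

lemma vsc_diff: "vsc k (u - v) = vsc k u - vsc k v"
  by (simp add: vsc_def fun_eq_iff algebra_simps)

lemma bilin_form_dpair: "bilin_form vsc dpair"
  unfolding bilin_form_def dpair_def vsc_def
  by (simp add: sum.distrib sum_distrib_left algebra_simps)

lemmas dpair_rules = bilin_form_rules[OF bilin_form_dpair]

definition basis_vec :: "'n \<Rightarrow> 'n \<Rightarrow> 'k::field" where
  "basis_vec i = (\<lambda>j. if j = i then 1 else 0)"

lemma dpair_basis_vec: "dpair a (basis_vec i) = a i"
  unfolding dpair_def basis_vec_def by (simp add: if_distrib cong: if_cong)

lemma dpair_eqI:
  assumes "\<And>u. dpair a u = dpair b u"
  shows "a = b"
proof
  fix i
  show "a i = b i" using assms[of "basis_vec i"] by (simp add: dpair_basis_vec)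
qed

lemma linear_functional_eq_dpair:
  fixes \<phi> :: "('n::finite \<Rightarrow> 'k::field) \<Rightarrow> 'k"
  assumes add: "\<And>u v. \<phi> (u + v) = \<phi> u + \<phi> v" and scale: "\<And>c u. \<phi> (vsc c u) = c * \<phi> u"
  shows "\<phi> u = dpair (\<lambda>i. \<phi> (basis_vec i)) u"
proof -
  have decompose: "(\<Sum>i\<in>UNIV. vsc (u i) (basis_vec i)) = u"
  proof
    fix j
    have "(\<Sum>i\<in>UNIV. vsc (u i) (basis_vec i)) j = (\<Sum>i\<in>UNIV. vsc (u i) (basis_vec i) j)"
      using sum_comp_morphism[of "\<lambda>f. f j" "\<lambda>i. vsc (u i) (basis_vec i)" UNIV] by (simp add: o_def)
    then show "(\<Sum>i\<in>UNIV. vsc (u i) (basis_vec i)) j = u j"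
      by (simp add: vsc_def basis_vec_def if_distrib cong: if_cong)
  qed
  have "\<phi> 0 = 0"
    using scale[of 0 0] by (simp add: vsc_def zero_fun_def)
  then have "\<phi> (\<Sum>i\<in>UNIV. vsc (u i) (basis_vec i)) = (\<Sum>i\<in>UNIV. \<phi> (vsc (u i) (basis_vec i)))"
    using sum_comp_morphism[of \<phi> "\<lambda>i. vsc (u i) (basis_vec i)" UNIV] add by (simp add: o_def)
  also have "\<dots> = dpair (\<lambda>i. \<phi> (basis_vec i)) u"
    by (simp add: dpair_def scale mult.commute)
  finally show ?thesis
    unfolding decompose .
qed

lemma dpair_dual_rep:
  fixes f :: "('n::finite \<Rightarrow> 'k::field) \<Rightarrow> ('n \<Rightarrow> 'k) \<Rightarrow> ('n \<Rightarrow> 'k)"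
  assumes "bilin_op vsc f"
  shows "dpair (dual_rep f x a) u = - dpair a (f x u)"
proof -
  define b where "b = (\<lambda>i. - dpair a (f x (basis_vec i)))"
  have b: "\<forall>u. dpair b u = - dpair a (f x u)"
  proof
    fix u
    show "dpair b u = - dpair a (f x u)"
      unfolding b_def
      by (rule linear_functional_eq_dpair[symmetric])
        (simp_all only: bilin_op_rules[OF assms] dpair_rules minus_add_distrib mult_minus_right)
  qed
  have "dual_rep f x a = b"
    unfolding dual_rep_def
  proof (rule the_equality)
    fix b' assume "\<forall>u. dpair b' u = - dpair a (f x u)"
    with b show "b' = b" by (intro dpair_eqI) simp
  qed (rule b)
  with b show ?thesis by simp
qed

definition bilin_action ::
    "('k::field \<Rightarrow> 'a::ab_group_add \<Rightarrow> 'a) \<Rightarrow> ('k \<Rightarrow> 'v::ab_group_add \<Rightarrow> 'v) \<Rightarrow>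
      ('a \<Rightarrow> 'v \<Rightarrow> 'v) \<Rightarrow> bool"
  where
  "bilin_action sc sc' \<mu> \<longleftrightarrow>
     (\<forall>x y a. \<mu> (x + y) a = \<mu> x a + \<mu> y a) \<and>
     (\<forall>x a b. \<mu> x (a + b) = \<mu> x a + \<mu> x b) \<and>
     (\<forall>k x a. \<mu> (sc k x) a = sc' k (\<mu> x a)) \<and>
     (\<forall>k x a. \<mu> x (sc' k a) = sc' k (\<mu> x a))"

lemma bilin_action_rules:
  assumes "bilin_action sc sc' \<mu>"
  shows "\<mu> (x + y) a = \<mu> x a + \<mu> y a" "\<mu> x (a + b) = \<mu> x a + \<mu> x b"
    "\<mu> 0 a = 0" "\<mu> x 0 = 0" "\<mu> (- x) a = - \<mu> x a" "\<mu> x (- a) = - \<mu> x a"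
    "\<mu> (x - y) a = \<mu> x a - \<mu> y a" "\<mu> x (a - b) = \<mu> x a - \<mu> x b"
    "\<mu> (sc k x) a = sc' k (\<mu> x a)" "\<mu> x (sc' k a) = sc' k (\<mu> x a)"
  using assms biadditive_rules[of \<mu>] unfolding bilin_action_def by simp_all

definition poisson_rep where
  "poisson_rep sc sc' m br \<mu> \<rho> \<longleftrightarrow> bilin_action sc sc' \<mu> \<and> bilin_action sc sc' \<rho> \<and>
     (\<forall>x y a. \<mu> (m x y) a = \<mu> x (\<mu> y a)) \<and>
     (\<forall>x y a. \<rho> (br x y) a = \<rho> x (\<rho> y a) - \<rho> y (\<rho> x a)) \<and>
     (\<forall>x y a. \<rho> (m x y) a = \<mu> y (\<rho> x a) + \<mu> x (\<rho> y a)) \<and>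
     (\<forall>x y a. \<mu> (br x y) a = \<rho> x (\<mu> y a) - \<mu> y (\<rho> x a))"

lemma poisson_alg_semidirect:
  assumes A: "poisson_alg sc m br" and V: "poisson_rep sc sc' m br \<mu> \<rho>"
    and sc'_add: "\<And>k a b. sc' k (a + b) = sc' k a + sc' k b"
  shows "poisson_alg (\<lambda>k p. (sc k (fst p), sc' k (snd p))) (sd_mult m \<mu>) (sd_bracket br \<rho>)"
proof -
  have sc'_diff: "sc' k (a - b) = sc' k a - sc' k b" for k a b
    by (metis sc'_add diff_add_cancel add_diff_cancel)
  have mu: "bilin_action sc sc' \<mu>" and rho: "bilin_action sc sc' \<rho>"
    and mu_m: "\<mu> (m x y) a = \<mu> x (\<mu> y a)"
    and rho_br: "\<rho> (br x y) a = \<rho> x (\<rho> y a) - \<rho> y (\<rho> x a)"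
    and rho_m: "\<rho> (m x y) a = \<mu> y (\<rho> x a) + \<mu> x (\<rho> y a)"
    and mu_br: "\<mu> (br x y) a = \<rho> x (\<mu> y a) - \<mu> y (\<rho> x a)" for x y a
    using V unfolding poisson_rep_def by auto
  have m: "bilin_op sc m" and br: "bilin_op sc br" and m_comm: "m x y = m y x"
    and m_assoc: "m (m x y) z = m x (m y z)" and br_self: "br x x = 0"
    and br_jacobi: "br x (br y z) + br y (br z x) + br z (br x y) = 0"
    and br_leibniz: "br z (m x y) = m (br z x) y + m x (br z y)" for x y z
    using A unfolding poisson_alg_def comm_assoc_alg_def lie_alg_def by auto
  have mu_comm: "\<mu> x (\<mu> y a) = \<mu> y (\<mu> x a)" for x y a
    by (metis mu_m m_comm)
  note rules = bilin_op_rules[OF m] bilin_op_rules[OF br] bilin_action_rules[OF mu]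
    bilin_action_rules[OF rho] sc'_add sc'_diff
  have mult: "sd_mult m \<mu> (x, a) (y, b) = (m x y, \<mu> x b + \<mu> y a)" for x y a b
    by (simp add: sd_mult_def)
  have bracket: "sd_bracket br \<rho> (x, a) (y, b) = (br x y, \<rho> x b - \<rho> y a)" for x y a b
    by (simp add: sd_bracket_def)
  have comm_assoc: "comm_assoc_alg (\<lambda>k p. (sc k (fst p), sc' k (snd p))) (sd_mult m \<mu>)"
    unfolding comm_assoc_alg_def bilin_op_def split_paired_All
  proof (intro conjI allI)
    fix x y z a b c k
    show "sd_mult m \<mu> (x, a) (y, b) = sd_mult m \<mu> (y, b) (x, a)"
      by (simp add: mult m_comm add.commute)
    show "sd_mult m \<mu> (sd_mult m \<mu> (x, a) (y, b)) (z, c) =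
        sd_mult m \<mu> (x, a) (sd_mult m \<mu> (y, b) (z, c))"
      by (simp add: mult rules m_assoc mu_m mu_comm[of z] add_ac)
  qed (simp_all add: mult rules add_ac)
  have lie: "lie_alg (\<lambda>k p. (sc k (fst p), sc' k (snd p))) (sd_bracket br \<rho>)"
    unfolding lie_alg_def bilin_op_def split_paired_All
  proof (intro conjI allI)
    fix x y z a b c
    show "sd_bracket br \<rho> (x, a) (sd_bracket br \<rho> (y, b) (z, c))
        + sd_bracket br \<rho> (y, b) (sd_bracket br \<rho> (z, c) (x, a))
        + sd_bracket br \<rho> (z, c) (sd_bracket br \<rho> (x, a) (y, b)) = 0"
      by (simp add: bracket rules rho_br br_jacobi[unfolded add.assoc] zero_prod_def algebra_simps)
  qed (simp_all add: bracket rules br_self zero_prod_def algebra_simps)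
  have leibniz: "sd_bracket br \<rho> (z, c) (sd_mult m \<mu> (x, a) (y, b)) =
      sd_mult m \<mu> (sd_bracket br \<rho> (z, c) (x, a)) (y, b) +
      sd_mult m \<mu> (x, a) (sd_bracket br \<rho> (z, c) (y, b))"
    for x y z a b c
    by (simp add: mult bracket rules br_leibniz rho_m mu_br algebra_simps)
  show ?thesis
    unfolding poisson_alg_def split_paired_All using comm_assoc lie leibniz by blast
qed

lemma bilin_action_neg_dual_rep:
  assumes "bilin_op vsc f"
  shows "bilin_action vsc vsc (\<lambda>x a. - dual_rep f x a)"
  unfolding bilin_action_def
  by (intro conjI allI; rule dpair_eqI;
      simp add: dpair_dual_rep[OF assms] dpair_rules bilin_op_rules[OF assms])

locale PCA_algebra =
  fixes sc :: "'k::field \<Rightarrow> 'v::ab_group_add \<Rightarrow> 'v" and m circ :: "'v \<Rightarrow> 'v \<Rightarrow> 'v"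
  assumes PCA: "PCA_alg sc m circ"
begin

abbreviation br :: "'v \<Rightarrow> 'v \<Rightarrow> 'v" where "br x y \<equiv> circ x y - circ y x"

lemma m_bilin: "bilin_op sc m" and circ_bilin: "bilin_op sc circ"
  and m_comm: "m x y = m y x" and m_assoc: "m (m x y) z = m x (m y z)"
  and circ_left_symmetric: "circ x (circ y z) - circ y (circ x z) = circ (circ y x - circ x y) z"
  and circ_commutator_cyclic:
    "circ (circ x y - circ y x) z + circ (circ y z - circ z y) x + circ (circ z x - circ x z) y = 0"
  and circ_m_left: "circ (m x y) z = m x (circ y z) + m y (circ x z)"
  and m_commutator_circ: "m (circ x y - circ y x) z = m y (circ x z) - circ x (m y z)"
  and circ_right_m:
    "circ z (m x y) + m z (circ x y) + m z (circ y x) - circ (m x y) z - circ (m x y) z = 0"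
  using PCA unfolding PCA_alg_def comm_assoc_alg_def anti_pre_lie_alg_def by auto

lemmas m_rules = bilin_op_rules[OF m_bilin] and circ_rules = bilin_op_rules[OF circ_bilin]

lemma circ_m_left_circ: "circ (m x y) z = circ x (m y z) + circ y (m x z)"
proof -
  have "circ (m x y) z - (circ x (m y z) + circ y (m x z)) =
      (circ (m x y) z - (m x (circ y z) + m y (circ x z)))
    - (m (circ x y - circ y x) z - (m y (circ x z) - circ x (m y z)))
    - (m (circ y x - circ x y) z - (m x (circ y z) - circ y (m x z)))"
    by (simp add: m_rules algebra_simps)
  then show ?thesis
    by (simp only: circ_m_left m_commutator_circ diff_self diff_0_right right_minus_eq)
qed

lemma br_leibniz: "br z (m x y) = m (br z x) y + m x (br z y)"
proof -
  have "br z (m x y) = circ (m x y) z - m z (circ x y) - m z (circ y x)"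
    using circ_right_m[of z x y] by (simp add: algebra_simps)
  also have "\<dots> = circ x (m z y) + circ y (m z x) - m z (circ x y) - m z (circ y x)"
    by (simp only: circ_m_left_circ m_comm[of y z] m_comm[of x z])
  also have "\<dots> = m (br z x) y + m x (br z y)"
  proof -
    have zx: "m (br z x) y = circ x (m z y) - m z (circ x y)"
      using m_commutator_circ[of x z y] by (metis m_rules(5) minus_diff_eq)
    have zy: "m x (br z y) = circ y (m z x) - m z (circ y x)"
      using m_commutator_circ[of y z x] by (metis m_rules(5) minus_diff_eq m_comm)
    show ?thesis unfolding zx zy by (simp add: algebra_simps)
  qed
  finally show ?thesis .
qed

lemma br_jacobi: "br x (br y z) + br y (br z x) + br z (br x y) = 0"
proof -
  have "br x (br y z) + br y (br z x) + br z (br x y) =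
      (circ x (circ y z) - circ y (circ x z) - circ (circ y x - circ x y) z)
    + (circ y (circ z x) - circ z (circ y x) - circ (circ z y - circ y z) x)
    + (circ z (circ x y) - circ x (circ z y) - circ (circ x z - circ z x) y)
    - (circ (circ x y - circ y x) z + circ (circ y z - circ z y) x + circ (circ z x - circ x z) y)
    - (circ (circ x y - circ y x) z + circ (circ y z - circ z y) x + circ (circ z x - circ x z) y)"
    by (simp add: circ_rules algebra_simps)
  then show ?thesis
    by (simp only: circ_left_symmetric circ_commutator_cyclic diff_self diff_0_right add_0)
qed

lemma poisson_alg_commutator:
  assumes "\<And>k u v. sc k (u - v) = sc k u - sc k v"
  shows "poisson_alg sc m br"
  unfolding poisson_alg_def comm_assoc_alg_def lie_alg_def
  using m_bilin m_comm m_assoc bilin_op_commutator[OF circ_bilin assms] br_jacobi br_leibniz by auto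

end

lemma poisson_rep_dual_PCA:
  assumes "PCA_alg vsc m circ"
  shows "poisson_rep vsc vsc m (\<lambda>x y. circ x y - circ y x)
    (\<lambda>x a. - dual_rep m x a) (\<lambda>x a. - dual_rep circ x a)"
proof -
  interpret PCA_algebra vsc m circ by (rule PCA_algebra.intro) (rule assms)
  note pair = dpair_dual_rep[OF m_bilin] dpair_dual_rep[OF circ_bilin] dpair_rules
  have "- dual_rep m (m x y) a = - dual_rep m x (- dual_rep m y a)" for x y a
    by (rule dpair_eqI) (simp add: pair m_comm[of x y] m_assoc)
  moreover have "- dual_rep circ (br x y) a =
      - dual_rep circ x (- dual_rep circ y a) - - dual_rep circ y (- dual_rep circ x a)" for x y a
    by (rule dpair_eqI) (simp add: pair flip: circ_left_symmetric)
  moreover have "- dual_rep circ (m x y) a =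
      - dual_rep m y (- dual_rep circ x a) + - dual_rep m x (- dual_rep circ y a)" for x y a
    by (rule dpair_eqI) (simp add: pair circ_m_left_circ)
  moreover have "- dual_rep m (br x y) a =
      - dual_rep circ x (- dual_rep m y a) - - dual_rep m y (- dual_rep circ x a)" for x y a
    by (rule dpair_eqI) (simp add: pair m_commutator_circ)
  ultimately show ?thesis
    unfolding poisson_rep_def
    using bilin_action_neg_dual_rep[OF m_bilin] bilin_action_neg_dual_rep[OF circ_bilin] by blast
qed

lemma invariant_B_d:
  fixes m :: "('n::finite \<Rightarrow> 'k::field) \<Rightarrow> ('n \<Rightarrow> 'k) \<Rightarrow> ('n \<Rightarrow> 'k)"
  assumes m: "bilin_op vsc m" and m_comm: "\<And>x y. m x y = m y x"
  shows "invariant_form (sd_mult m (\<lambda>x a. - dual_rep m x a)) B_d"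
  unfolding invariant_form_def split_paired_All
proof (intro allI)
  fix x y z a b c :: "'n \<Rightarrow> 'k"
  show "B_d (sd_mult m (\<lambda>x a. - dual_rep m x a) (x, a) (y, b)) (z, c) =
      B_d (x, a) (sd_mult m (\<lambda>x a. - dual_rep m x a) (y, b) (z, c))"
    by (simp add: B_d_def sd_mult_def dpair_dual_rep[OF m] dpair_rules m_comm[of _ x] m_comm[of z y]
        add_ac)
qed

lemma comm_2cocycle_B_d:
  fixes c :: "('n::finite \<Rightarrow> 'k::field) \<Rightarrow> ('n \<Rightarrow> 'k) \<Rightarrow> ('n \<Rightarrow> 'k)"
  assumes c: "bilin_op vsc c"
  shows "comm_2cocycle (sd_bracket (\<lambda>x y. c x y - c y x) (\<lambda>x a. - dual_rep c x a)) B_d"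
  unfolding comm_2cocycle_def symmetric_form_def split_paired_All
proof (intro conjI allI)
  fix x y z a b d :: "'n \<Rightarrow> 'k"
  show "B_d (x, a) (y, b) = B_d (y, b) (x, a)"
    by (simp add: B_d_def)
  show "B_d (sd_bracket (\<lambda>x y. c x y - c y x) (\<lambda>x a. - dual_rep c x a) (x, a) (y, b)) (z, d)
      + B_d (sd_bracket (\<lambda>x y. c x y - c y x) (\<lambda>x a. - dual_rep c x a) (y, b) (z, d)) (x, a)
      + B_d (sd_bracket (\<lambda>x y. c x y - c y x) (\<lambda>x a. - dual_rep c x a) (z, d) (x, a)) (y, b) = 0"
    by (simp add: B_d_def sd_bracket_def dpair_dual_rep[OF c] dpair_rules bilin_op_rules[OF c]
        algebra_simps)
qed

theorem mainTheorem3: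
  shows
  "(\<forall>(m :: ('n::finite \<Rightarrow> 'k::field_char_0) \<Rightarrow> ('n \<Rightarrow> 'k) \<Rightarrow> ('n \<Rightarrow> 'k)) br B circ.
      poisson_alg vsc m br \<and> bilin_form vsc B \<and> nondegenerate_form B \<and> symmetric_form B \<and>
      invariant_form m B \<and> comm_2cocycle br B \<and>
      (\<forall>x y z. B (circ x y) z = B y (br x z))
      \<longrightarrow> PCA_alg vsc m circ \<and> (\<forall>x y. circ x y - circ y x = br x y))
   \<and>
   (\<forall>(m :: ('n \<Rightarrow> 'k) \<Rightarrow> ('n \<Rightarrow> 'k) \<Rightarrow> ('n \<Rightarrow> 'k)) circ.
      PCA_alg vsc m circ \<longrightarrow>
      (let br = (\<lambda>x y. circ x y - circ y x);
           mu = (\<lambda>x a. - dual_rep m x a);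
           rho = (\<lambda>x a. - dual_rep circ x a)
       in poisson_alg psc (sd_mult m mu) (sd_bracket br rho) \<and>
          invariant_form (sd_mult m mu) B_d \<and>
          comm_2cocycle (sd_bracket br rho) B_d))"
proof (rule conjI; intro allI impI)
  fix m br circ :: "('n::finite \<Rightarrow> 'k::field_char_0) \<Rightarrow> ('n \<Rightarrow> 'k) \<Rightarrow> ('n \<Rightarrow> 'k)"
    and B :: "('n \<Rightarrow> 'k) \<Rightarrow> ('n \<Rightarrow> 'k) \<Rightarrow> 'k"
  assume "poisson_alg vsc m br \<and> bilin_form vsc B \<and> nondegenerate_form B \<and> symmetric_form B \<and>
      invariant_form m B \<and> comm_2cocycle br B \<and> (\<forall>x y z. B (circ x y) z = B y (br x z))"
  then interpret poisson_cocycle_form vsc m br circ B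
    by unfold_locales auto
  show "PCA_alg vsc m circ \<and> (\<forall>x y. circ x y - circ y x = br x y)"
    using PCA_alg_circ circ_minus_circ by blast
next
  fix m circ :: "('n \<Rightarrow> 'k) \<Rightarrow> ('n \<Rightarrow> 'k) \<Rightarrow> ('n \<Rightarrow> 'k)"
  assume PCA: "PCA_alg vsc m circ"
  then interpret PCA_algebra vsc m circ
    by (rule PCA_algebra.intro)
  have psc: "psc = (\<lambda>k p. (vsc k (fst p), vsc k (snd p)))"
    by (simp add: psc_def fun_eq_iff)
  show "let br = (\<lambda>x y. circ x y - circ y x);
           mu = (\<lambda>x a. - dual_rep m x a);
           rho = (\<lambda>x a. - dual_rep circ x a)
       in poisson_alg psc (sd_mult m mu) (sd_bracket br rho) \<and>
          invariant_form (sd_mult m mu) B_d \<and>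
          comm_2cocycle (sd_bracket br rho) B_d"
    unfolding Let_def psc
    by (intro conjI
        poisson_alg_semidirect[OF poisson_alg_commutator[OF vsc_diff] poisson_rep_dual_PCA[OF PCA] vsc_add]
        invariant_B_d[OF m_bilin m_comm] comm_2cocycle_B_d[OF circ_bilin])
qed

end
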